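(* Let $G=(V,E)$ be a finite simple graph of order $n$ and let $T=n-1$. If $(s,x,y,z)$ is an optimal solution of the Infection Model $\mathrm{IM}(G,T)$ (minimizing $\sum_{v\in V}s_v$), then $C=\{v\in V\colon s_v=1\}$ is a minimum zero forcing set of $G$.
   Context: Zero forcing: under the standard color change rule a filled vertex $u$ can force a non-filled vertex $v$ if $v$ is the only non-filled neighbor of $u$; $C\subseteq V$ is a zero forcing set if, starting with $C$ filled and repeatedly forcing, all of $V$ becomes filled. $\mathrm{Z}(G)$ is the minimum size of a zero forcing set, and a minimum zero forcing set is a zero forcing set of size $\mathrm{Z}(G)$. $N(u)$ is the neighborhood of $u$. Infection Model: let $A$ be the set of arcs containing both $(u,v)$ and $(v,u)$ for each edge $\{u,v\}\in E$. The model $\mathrm{IM}(G,T)$ has variables $s_v\in\{0,1\}$ and $x_v\in\{0,1,\dots,T\}$ for $v\in V$, $y_a\in\{0,1\}$ for $a\in A$, and $z\in\{0,1,\dots,T\}$, subject to: (i) $s_v+\sum_{a=(u,v)\in A}y_a=1$ for all $v\in V$; (ii) $x_u-x_v+(T+1)y_a\leq T$ for all $a=(u,v)\in A$; (iii) $x_w-x_v+(T+1)y_a\leq T$ for all $a=(u,v)\in A$ and $w\in N(u)\setminus\{v\}$; (iv) $x_v-z\leq 0$ for all $v\in V$; objective: minimize $\sum_{v\in V}s_v$. *)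

theory Defs
  imports Main
begin

definition simple_graph :: "'a set \<Rightarrow> ('a \<Rightarrow> 'a \<Rightarrow> bool) \<Rightarrow> bool" where
  "simple_graph V E \<longleftrightarrow> finite V \<and> (\<forall>u v. E u v \<longrightarrow> u \<in> V \<and> v \<in> V)
     \<and> (\<forall>u v. E u v \<longrightarrow> E v u) \<and> (\<forall>u. \<not> E u u)"

definition nbhd :: "'a set \<Rightarrow> ('a \<Rightarrow> 'a \<Rightarrow> bool) \<Rightarrow> 'a \<Rightarrow> 'a set" where
  "nbhd V E u = {v \<in> V. E u v}"

text \<open>One application of the standard color change rule: filled u forces v,
  the only non-filled neighbour of u.\<close>
definition force_step :: "'a set \<Rightarrow> ('a \<Rightarrow> 'a \<Rightarrow> bool) \<Rightarrow> 'a set \<Rightarrow> 'a set \<Rightarrow> bool" where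
  "force_step V E S S' \<longleftrightarrow> (\<exists>u v. u \<in> S \<and> nbhd V E u - S = {v} \<and> S' = insert v S)"

definition zero_forcing_set :: "'a set \<Rightarrow> ('a \<Rightarrow> 'a \<Rightarrow> bool) \<Rightarrow> 'a set \<Rightarrow> bool" where
  "zero_forcing_set V E C \<longleftrightarrow> C \<subseteq> V \<and> (force_step V E)\<^sup>*\<^sup>* C V"

definition zero_forcing_number :: "'a set \<Rightarrow> ('a \<Rightarrow> 'a \<Rightarrow> bool) \<Rightarrow> nat" where
  "zero_forcing_number V E = Min {card C | C. zero_forcing_set V E C}"

definition min_zero_forcing_set :: "'a set \<Rightarrow> ('a \<Rightarrow> 'a \<Rightarrow> bool) \<Rightarrow> 'a set \<Rightarrow> bool" where
  "min_zero_forcing_set V E C \<longleftrightarrow> zero_forcing_set V E C \<and> card C = zero_forcing_number V E"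

definition arcs :: "'a set \<Rightarrow> ('a \<Rightarrow> 'a \<Rightarrow> bool) \<Rightarrow> ('a \<times> 'a) set" where
  "arcs V E = {(u, v). u \<in> V \<and> v \<in> V \<and> E u v}"

text \<open>Feasibility for the Infection Model IM(G,T). Variables are integer-valued functions;
  only their values on V resp. A matter.\<close>
definition IM_feasible :: "'a set \<Rightarrow> ('a \<Rightarrow> 'a \<Rightarrow> bool) \<Rightarrow> int \<Rightarrow>
    ('a \<Rightarrow> int) \<Rightarrow> ('a \<Rightarrow> int) \<Rightarrow> ('a \<times> 'a \<Rightarrow> int) \<Rightarrow> int \<Rightarrow> bool" where
  "IM_feasible V E T s x y z \<longleftrightarrow>
     (\<forall>v\<in>V. s v \<in> {0, 1}) \<and> (\<forall>v\<in>V. 0 \<le> x v \<and> x v \<le> T) \<and>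
     (\<forall>a\<in>arcs V E. y a \<in> {0, 1}) \<and> 0 \<le> z \<and> z \<le> T \<and>
     (\<forall>v\<in>V. s v + (\<Sum>a\<in>{a \<in> arcs V E. snd a = v}. y a) = 1) \<and>
     (\<forall>(u, v)\<in>arcs V E. x u - x v + (T + 1) * y (u, v) \<le> T) \<and>
     (\<forall>(u, v)\<in>arcs V E. \<forall>w \<in> nbhd V E u - {v}. x w - x v + (T + 1) * y (u, v) \<le> T) \<and>
     (\<forall>v\<in>V. x v - z \<le> 0)"

definition IM_optimal :: "'a set \<Rightarrow> ('a \<Rightarrow> 'a \<Rightarrow> bool) \<Rightarrow> int \<Rightarrow>
    ('a \<Rightarrow> int) \<Rightarrow> ('a \<Rightarrow> int) \<Rightarrow> ('a \<times> 'a \<Rightarrow> int) \<Rightarrow> int \<Rightarrow> bool" where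
  "IM_optimal V E T s x y z \<longleftrightarrow> IM_feasible V E T s x y z \<and>
     (\<forall>s' x' y' z'. IM_feasible V E T s' x' y' z' \<longrightarrow> (\<Sum>v\<in>V. s v) \<le> (\<Sum>v\<in>V. s' v))"

end

theory Submission
  imports Defs
begin

text \<open>Let \<open>C\<close> be the set of vertices with \<open>s\<^sub>v = 1\<close> in a feasible solution. Every other vertex
  \<open>v\<close> has an in-arc \<open>(u, v)\<close> with \<open>y = 1\<close>, and constraints (ii), (iii) then say that \<open>u\<close> and all
  neighbours of \<open>u\<close> except \<open>v\<close> have smaller \<open>x\<close> than \<open>v\<close>. So a non-filled vertex of least \<open>x\<close>
  can always be forced by \<open>u\<close>, and \<open>C\<close> is a zero forcing set. Conversely, recording for every
  vertex outside a zero forcing set \<open>C'\<close> the round \<open>t\<close> at which it is forced and its forcer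
  \<open>f\<close> yields a feasible solution with \<open>x = t\<close>, \<open>y = 1\<close> exactly on the arcs \<open>(f v, v)\<close>, and
  \<open>\<Sum> s = |C'|\<close>; at most \<open>n - |C'| \<le> n - 1\<close> rounds are needed, which is why \<open>T = n - 1\<close> suffices.\<close>

lemma IM_feasible_sum_eq_card:
  assumes "finite V" and "IM_feasible V E T s x y z"
  shows "(\<Sum>v\<in>V. s v) = int (card {v \<in> V. s v = 1})"
proof -
  have "(\<Sum>v\<in>V. s v) = (\<Sum>v\<in>V. if s v = 1 then 1 else 0)"
    using assms(2) unfolding IM_feasible_def by (intro sum.cong) auto
  also have "\<dots> = int (card {v \<in> V. s v = 1})"
    using assms(1) by (simp add: sum.inter_filter[symmetric])
  finally show ?thesis .
qed

lemma IM_feasible_in_arc: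
  assumes feas: "IM_feasible V E T s x y z" and vV: "v \<in> V" and sv: "s v \<noteq> 1"
  obtains u where "(u, v) \<in> arcs V E" and "x u < x v" and "\<forall>w \<in> nbhd V E u - {v}. x w < x v"
proof -
  let ?In = "{a \<in> arcs V E. snd a = v}"
  have "s v = 0" using feas vV sv unfolding IM_feasible_def by auto
  then have "(\<Sum>a\<in>?In. y a) = 1" using feas vV unfolding IM_feasible_def by auto
  then obtain a where a: "a \<in> ?In" "y a \<noteq> 0"
    by (metis (no_types, lifting) sum.neutral zero_neq_one)
  then obtain u where arc: "(u, v) \<in> arcs V E" and "a = (u, v)" by (cases a) auto
  with a feas have y1: "y (u, v) = 1" unfolding IM_feasible_def by auto
  have "x u - x v + (T + 1) * y (u, v) \<le> T"
    using feas arc unfolding IM_feasible_def by auto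
  then have "x u < x v" using y1 by simp
  moreover have "x w < x v" if "w \<in> nbhd V E u - {v}" for w
  proof -
    have "x w - x v + (T + 1) * y (u, v) \<le> T"
      using feas arc that unfolding IM_feasible_def by fastforce
    then show ?thesis using y1 by simp
  qed
  ultimately show ?thesis using arc that by blast
qed

lemma IM_feasible_forces_to_all:
  assumes fin: "finite V" and feas: "IM_feasible V E T s x y z"
    and "{v \<in> V. s v = 1} \<subseteq> S" and "S \<subseteq> V"
  shows "(force_step V E)\<^sup>*\<^sup>* S V"
  using assms(3,4)
proof (induction "card (V - S)" arbitrary: S rule: less_induct)
  case less
  show ?case
  proof (cases "S = V")
    case False
    then have "V - S \<noteq> {}" using less.prems by blast
    then obtain v where v: "v \<in> V - S" and v_least: "\<forall>w \<in> V - S. x v \<le> x w"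
      using fin by (metis arg_min_if_finite(1,2) finite_Diff not_le)
    then have "s v \<noteq> 1" using less.prems by blast
    with feas v obtain u where arc: "(u, v) \<in> arcs V E" and "x u < x v"
      and nb: "\<forall>w \<in> nbhd V E u - {v}. x w < x v"
      by (auto elim: IM_feasible_in_arc)
    then have "u \<in> S" using v_least arc unfolding arcs_def by force
    moreover have "nbhd V E u - S = {v}"
    proof -
      have "w \<in> S" if w: "w \<in> nbhd V E u - {v}" for w
      proof -
        have "x w < x v" and "w \<in> V" using nb w unfolding nbhd_def by auto
        then show ?thesis using v_least by force
      qed
      moreover have "v \<in> nbhd V E u" using arc unfolding arcs_def nbhd_def by auto
      ultimately show ?thesis using v by blast
    qed
    ultimately have step: "force_step V E S (insert v S)"
      unfolding force_step_def by blast
    have "card (V - insert v S) < card (V - S)"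
      using fin v by (metis Diff_insert card_Diff1_less finite_Diff)
    then have "(force_step V E)\<^sup>*\<^sup>* (insert v S) V"
      using less.hyps less.prems v by blast
    with step show ?thesis by (meson converse_rtranclp_into_rtranclp)
  qed simp
qed

corollary IM_feasible_zero_forcing_set:
  assumes "finite V" and "IM_feasible V E T s x y z"
  shows "zero_forcing_set V E {v \<in> V. s v = 1}"
  using IM_feasible_forces_to_all[OF assms] unfolding zero_forcing_set_def by blast

lemma force_steps_from_empty: "(force_step V E)\<^sup>*\<^sup>* {} S \<Longrightarrow> S = {}"
  by (induction rule: rtranclp_induct) (auto simp: force_step_def)

lemma zero_forcing_set_nonempty:
  assumes "zero_forcing_set V E C" and "V \<noteq> {}"
  shows "C \<noteq> {}"
  using assms force_steps_from_empty unfolding zero_forcing_set_def by blast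

text \<open>\<open>t v\<close> is the round in which \<open>v\<close> gets filled on the way from \<open>C\<close> to \<open>S\<close> and \<open>f v\<close> its
  forcer; one vertex is filled per round, whence the bound \<open>|S| - |C|\<close>.\<close>
definition forcing_chronology ::
    "'a set \<Rightarrow> ('a \<Rightarrow> 'a \<Rightarrow> bool) \<Rightarrow> 'a set \<Rightarrow> 'a set \<Rightarrow> ('a \<Rightarrow> int) \<Rightarrow> ('a \<Rightarrow> 'a) \<Rightarrow> bool" where
  "forcing_chronology V E C S t f \<longleftrightarrow> C \<subseteq> S \<and> S \<subseteq> V \<and> (\<forall>v\<in>C. t v = 0) \<and>
     (\<forall>v\<in>S. 0 \<le> t v \<and> t v \<le> int (card S) - int (card C)) \<and>
     (\<forall>v\<in>S - C. f v \<in> S \<and> E (f v) v \<and> t (f v) < t v \<and>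
        (\<forall>w\<in>nbhd V E (f v) - {v}. w \<in> S \<and> t w < t v))"

lemma forcing_chronology_force_step:
  assumes fin: "finite V" and chr: "forcing_chronology V E C S t f"
    and u: "u \<in> S" and nb: "nbhd V E u - S = {v}"
  shows "forcing_chronology V E C (insert v S)
    (t(v := int (card S) - int (card C) + 1)) (f(v := u))"
    (is "forcing_chronology V E C ?S' ?t ?f")
proof -
  let ?k = "int (card S) - int (card C) + 1"
  have vS: "v \<notin> S" and vV: "v \<in> V" and Euv: "E u v" using nb unfolding nbhd_def by auto
  have CS: "C \<subseteq> S" and SV: "S \<subseteq> V" using chr unfolding forcing_chronology_def by auto
  then have "finite S" using fin finite_subset by blast
  then have card_S': "card ?S' = card S + 1" using vS by simp
  have "card C \<le> card S" using CS \<open>finite S\<close> card_mono by blast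
  have t_less_k: "t w < ?k" if "w \<in> S" for w
    using chr that unfolding forcing_chronology_def by auto
  have "v \<notin> C" using vS CS by blast
  have "C \<subseteq> ?S'" "?S' \<subseteq> V" using CS SV vV by auto
  moreover have "\<forall>w\<in>C. ?t w = 0"
    using chr \<open>v \<notin> C\<close> unfolding forcing_chronology_def by auto
  moreover have "\<forall>w\<in>?S'. 0 \<le> ?t w \<and> ?t w \<le> int (card ?S') - int (card C)"
    using chr card_S' \<open>card C \<le> card S\<close> unfolding forcing_chronology_def by auto
  moreover have "?f w \<in> ?S' \<and> E (?f w) w \<and> ?t (?f w) < ?t w \<and>
      (\<forall>w'\<in>nbhd V E (?f w) - {w}. w' \<in> ?S' \<and> ?t w' < ?t w)"
    if w: "w \<in> ?S' - C" for w
  proof (cases "w = v")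
    case True
    have "\<forall>w'\<in>nbhd V E u - {v}. w' \<in> S \<and> t w' < ?k" using nb t_less_k by blast
    with True u vS Euv t_less_k show ?thesis by auto
  next
    case False
    then have "w \<in> S - C" using w by auto
    with chr vS have "f w \<in> S \<and> E (f w) w \<and> t (f w) < t w \<and>
        (\<forall>w'\<in>nbhd V E (f w) - {w}. w' \<in> S \<and> t w' < t w)" and "f w \<noteq> v"
      unfolding forcing_chronology_def by blast+
    with False vS show ?thesis by fastforce
  qed
  ultimately show ?thesis unfolding forcing_chronology_def by blast
qed

lemma forcing_chronology_exists:
  assumes fin: "finite V" and "C \<subseteq> V" and "(force_step V E)\<^sup>*\<^sup>* C S"
  shows "\<exists>t f. forcing_chronology V E C S t f"
  using assms(3)
proof (induction rule: rtranclp_induct)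
  case base
  show ?case using \<open>C \<subseteq> V\<close> unfolding forcing_chronology_def by (intro exI[of _ "\<lambda>_. 0"]) auto
next
  case (step S S')
  then obtain t f where "forcing_chronology V E C S t f" by blast
  moreover from step.hyps(2) obtain u v where "u \<in> S" and "nbhd V E u - S = {v}"
    and "S' = insert v S" unfolding force_step_def by blast
  ultimately show ?case using forcing_chronology_force_step[OF fin] by blast
qed

lemma forcing_chronology_IM_feasible:
  fixes V :: "'a set"
  defines "T \<equiv> int (card V) - 1"
  assumes fin: "finite V" and "C \<noteq> {}" and chr: "forcing_chronology V E C V t f"
  shows "IM_feasible V E T (\<lambda>v. if v \<in> C then 1 else 0) t
    (\<lambda>(u, v). if v \<notin> C \<and> u = f v then 1 else 0) T"
    (is "IM_feasible V E T ?s t ?y T")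
proof -
  have CV: "C \<subseteq> V" using chr unfolding forcing_chronology_def by blast
  then have "card C \<ge> 1" using \<open>C \<noteq> {}\<close> fin
    by (metis One_nat_def Suc_leI card_gt_0_iff finite_subset)
  then have t_range: "0 \<le> t v \<and> t v \<le> T" if "v \<in> V" for v
    using chr that unfolding forcing_chronology_def T_def by force
  have "arcs V E \<subseteq> V \<times> V" unfolding arcs_def by auto
  then have fin_arcs: "finite (arcs V E)" using fin finite_subset by blast
  have in_arcs: "(\<Sum>a\<in>{a \<in> arcs V E. snd a = v}. ?y a) = (if v \<in> C then 0 else 1)"
    if "v \<in> V" for v
  proof (cases "v \<in> C")
    case False
    then have "(f v, v) \<in> {a \<in> arcs V E. snd a = v}"
      using chr that unfolding forcing_chronology_def arcs_def by auto
    moreover have "finite {a \<in> arcs V E. snd a = v}" using fin_arcs by simp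
    moreover have "(\<Sum>a\<in>{a \<in> arcs V E. snd a = v}. ?y a) =
        (\<Sum>a\<in>{a \<in> arcs V E. snd a = v}. if a = (f v, v) then 1 else 0)"
      using False by (intro sum.cong) (auto split: if_splits)
    ultimately show ?thesis using False by (simp add: sum.delta)
  qed (auto intro: sum.neutral)
  have arc_ineq: "t w - t v + (T + 1) * ?y (u, v) \<le> T"
    if "(u, v) \<in> arcs V E" and "w \<in> insert u (nbhd V E u - {v})" for u v w
  proof (cases "v \<notin> C \<and> u = f v")
    case True
    then have "t w < t v"
      using chr that unfolding forcing_chronology_def arcs_def by auto
    with True show ?thesis by simp
  next
    case False
    have "v \<in> V" "w \<in> V" using that unfolding arcs_def nbhd_def by auto
    then have "0 \<le> t v" "t w \<le> T" using t_range by auto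
    with False show ?thesis by auto
  qed
  have "V \<noteq> {}" using CV \<open>C \<noteq> {}\<close> by blast
  then have "0 \<le> T" using fin unfolding T_def by (simp add: card_gt_0_iff Suc_le_eq)
  moreover have "\<forall>v\<in>V. ?s v + (\<Sum>a\<in>{a \<in> arcs V E. snd a = v}. ?y a) = 1"
    using in_arcs by simp
  moreover have "\<forall>(u, v)\<in>arcs V E. t u - t v + (T + 1) * ?y (u, v) \<le> T"
    using arc_ineq by blast
  moreover have "\<forall>(u, v)\<in>arcs V E. \<forall>w\<in>nbhd V E u - {v}. t w - t v + (T + 1) * ?y (u, v) \<le> T"
    using arc_ineq by blast
  ultimately show ?thesis
    using t_range unfolding IM_feasible_def by auto
qed

lemma zero_forcing_set_IM_feasible:
  assumes "finite V" and "V \<noteq> {}" and "zero_forcing_set V E C"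
  obtains s x y z where "IM_feasible V E (int (card V) - 1) s x y z"
    and "{v \<in> V. s v = 1} = C"
proof -
  have CV: "C \<subseteq> V" and reach: "(force_step V E)\<^sup>*\<^sup>* C V"
    using assms(3) unfolding zero_forcing_set_def by auto
  obtain t f where chr: "forcing_chronology V E C V t f"
    using forcing_chronology_exists[OF assms(1) CV reach] by blast
  have "C \<noteq> {}" using zero_forcing_set_nonempty[OF assms(3,2)] .
  note forcing_chronology_IM_feasible[OF assms(1) this chr]
  moreover have "{v \<in> V. (if v \<in> C then 1 else 0 :: int) = 1} = C" using CV by auto
  ultimately show ?thesis by (rule that)
qed

lemma min_zero_forcing_setI:
  assumes "finite V" and "zero_forcing_set V E C"
    and "\<And>C'. zero_forcing_set V E C' \<Longrightarrow> card C \<le> card C'"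
  shows "min_zero_forcing_set V E C"
proof -
  have "{card C | C. zero_forcing_set V E C} \<subseteq> {..card V}"
    using assms(1) by (auto simp: zero_forcing_set_def intro: card_mono)
  then have "finite {card C | C. zero_forcing_set V E C}" using finite_subset by blast
  then have "zero_forcing_number V E = card C"
    unfolding zero_forcing_number_def using assms(2,3) by (intro Min_eqI) auto
  with assms(2) show ?thesis unfolding min_zero_forcing_set_def by simp
qed

theorem corollary3p3:
  fixes V :: "'a set" and E :: "'a \<Rightarrow> 'a \<Rightarrow> bool"
    and s x :: "'a \<Rightarrow> int" and y :: "'a \<times> 'a \<Rightarrow> int" and z :: int
  assumes "simple_graph V E"
    and "IM_optimal V E (int (card V) - 1) s x y z"
  shows "min_zero_forcing_set V E {v \<in> V. s v = 1}"
proof (rule min_zero_forcing_setI)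
  show fin: "finite V" using assms(1) unfolding simple_graph_def by simp
  have feas: "IM_feasible V E (int (card V) - 1) s x y z"
    using assms(2) unfolding IM_optimal_def by blast
  with fin show "zero_forcing_set V E {v \<in> V. s v = 1}"
    by (rule IM_feasible_zero_forcing_set)
  have "0 \<le> int (card V) - 1" using feas unfolding IM_feasible_def by linarith
  then have "V \<noteq> {}" by auto
  fix C' assume "zero_forcing_set V E C'"
  with fin \<open>V \<noteq> {}\<close> obtain s' x' y' z' where feas': "IM_feasible V E (int (card V) - 1) s' x' y' z'"
    and C': "{v \<in> V. s' v = 1} = C'"
    by (rule zero_forcing_set_IM_feasible)
  have "int (card {v \<in> V. s v = 1}) = (\<Sum>v\<in>V. s v)"
    using IM_feasible_sum_eq_card[OF fin feas] by simp
  also have "\<dots> \<le> (\<Sum>v\<in>V. s' v)"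
    using assms(2) feas' unfolding IM_optimal_def by blast
  also have "\<dots> = int (card C')"
    using IM_feasible_sum_eq_card[OF fin feas'] C' by simp
  finally show "card {v \<in> V. s v = 1} \<le> card C'" by simp
qed

end
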